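(* Let $v\geq 8$, let $C_v$ be the configuration on $\mathbb{Z}_v$ with blocks $\{m,m+1,m+3\}$, $m\in\mathbb{Z}_v$, and let $S$ be a blocking set of $C_v$, with associated circular binary word $\mathbf{b}(S)=b_0\cdots b_{v-1}$ ($b_i=1$ iff $i\in S$). Then either (a) $\mathbf{b}(S)$ alternates $0101\cdots$ or $1010\cdots$ (which is possible only if $v$ is even), or (b) $\mathbf{b}(S)$ consists of runs of 0s and runs of 1s each of length 2 or 3.
   Context: A blocking set is a subset $Q$ of the points such that every block contains at least one point of $Q$ and at least one point not in $Q$. A circular binary word of length $n$ is a sequence $b_0,\dots,b_{n-1}\in\{0,1\}$ with indices taken modulo $n$. A run of length $k$ is a maximal sequence of $k$ cyclically consecutive equal digits (bounded on both sides by the other digit). *)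

theory Defs
  imports Main
begin

text \<open>Z_v is represented by {0..<v} (type nat), arithmetic mod v.\<close>

definition Cv_blocks :: "nat \<Rightarrow> nat set set" where
  "Cv_blocks v = {{m, (m + 1) mod v, (m + 3) mod v} | m. m < v}"

definition blocking_set :: "'a set \<Rightarrow> 'a set set \<Rightarrow> 'a set \<Rightarrow> bool" where
  "blocking_set P B Q \<longleftrightarrow> Q \<subseteq> P \<and> (\<forall>blk\<in>B. (\<exists>x\<in>blk. x \<in> Q) \<and> (\<exists>x\<in>blk. x \<notin> Q))"

definition word :: "nat \<Rightarrow> nat set \<Rightarrow> nat \<Rightarrow> bool" where
  "word v S i \<longleftrightarrow> i mod v \<in> S"

definition is_run :: "nat \<Rightarrow> (nat \<Rightarrow> bool) \<Rightarrow> nat \<Rightarrow> nat \<Rightarrow> bool" where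
  "is_run v b i k \<longleftrightarrow> i < v \<and> 0 < k \<and> k < v \<and>
     b ((i + v - 1) mod v) \<noteq> b i \<and> b ((i + k) mod v) \<noteq> b i \<and>
     (\<forall>t<k. b ((i + t) mod v) = b i)"

definition alternating :: "nat \<Rightarrow> (nat \<Rightarrow> bool) \<Rightarrow> bool" where
  "alternating v b \<longleftrightarrow> (\<forall>i<v. b ((i + 1) mod v) \<noteq> b i)"

definition runs_2_or_3 :: "nat \<Rightarrow> (nat \<Rightarrow> bool) \<Rightarrow> bool" where
  "runs_2_or_3 v b \<longleftrightarrow>
     (\<forall>i<v. \<exists>j k. is_run v b j k \<and> (\<exists>t<k. (j + t) mod v = i)) \<and>
     (\<forall>j k. is_run v b j k \<longrightarrow> k = 2 \<or> k = 3)"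

end

theory Submission
  imports Defs
begin

text \<open>Read the word as an infinite \<open>v\<close>-periodic sequence \<open>B\<close>. The blocking property says exactly
  that no block \<open>{m, m+1, m+3}\<close> is monochromatic. If \<open>B\<close> changes at two consecutive places
  \<open>j+1, j+2\<close>, then it changes at \<open>j, j+1\<close> as well (otherwise the block at \<open>j\<close> would be
  monochromatic); propagating this leftwards and using periodicity, \<open>B\<close> alternates. Otherwise
  no run has length 1, and a run of length at least 4 would contain a monochromatic block,
  so all runs have length 2 or 3.\<close>

definition no_monochromatic_block :: "(nat \<Rightarrow> bool) \<Rightarrow> bool" where
  "no_monochromatic_block B \<longleftrightarrow> (\<forall>m. \<not> (B m = B (m + 1) \<and> B m = B (m + 3)))"

definition changes_twice :: "(nat \<Rightarrow> bool) \<Rightarrow> nat \<Rightarrow> bool" where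
  "changes_twice B j \<longleftrightarrow> B j \<noteq> B (j + 1) \<and> B (j + 1) \<noteq> B (j + 2)"

text \<open>A run of the infinite word. For \<open>j = 0\<close> the truncated \<open>j - 1\<close> makes it false.\<close>
definition maximal_segment :: "(nat \<Rightarrow> bool) \<Rightarrow> nat \<Rightarrow> nat \<Rightarrow> bool" where
  "maximal_segment B j k \<longleftrightarrow>
     B (j - 1) \<noteq> B j \<and> B (j + k) \<noteq> B j \<and> (\<forall>t<k. B (j + t) = B j)"

lemma word_mod [simp]: "word v S (x mod v) = word v S x"
  by (simp add: word_def)

lemma blocking_set_no_monochromatic_block:
  assumes "v > 0" and "blocking_set {..<v} (Cv_blocks v) S"
  shows "no_monochromatic_block (word v S)"
  unfolding no_monochromatic_block_def
proof (intro allI notI)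
  fix m assume mono: "word v S m = word v S (m + 1) \<and> word v S m = word v S (m + 3)"
  let ?blk = "{m mod v, (m mod v + 1) mod v, (m mod v + 3) mod v}"
  have "?blk \<in> Cv_blocks v"
    unfolding Cv_blocks_def using assms(1) by auto
  with assms(2) obtain x y where "x \<in> ?blk" "x \<in> S" "y \<in> ?blk" "y \<notin> S"
    unfolding blocking_set_def by blast
  moreover have "(m mod v + 1) mod v = (m + 1) mod v" "(m mod v + 3) mod v = (m + 3) mod v"
    by (metis mod_add_left_eq)+
  ultimately show False
    using mono by (auto simp: word_def)
qed

lemma changes_twice_Suc:
  assumes "no_monochromatic_block B" and "changes_twice B (Suc j)"
  shows "changes_twice B j"
  using assms unfolding no_monochromatic_block_def changes_twice_def
  by (auto simp: numeral_eq_Suc)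

lemma changes_twice_le:
  assumes "no_monochromatic_block B" and "changes_twice B n" and "j \<le> n"
  shows "changes_twice B j"
  using assms(3,2) by (induction j rule: inc_induct) (auto intro: changes_twice_Suc[OF assms(1)])

lemma periodic_add_mult:
  fixes B :: "nat \<Rightarrow> 'a"
  assumes "\<And>x. B (x mod v) = B x"
  shows "B (x + k * v) = B x"
  by (metis assms[of "x + k * v"] assms[of x] mod_mult_self1)

lemma alternating_if_changes_twice:
  assumes periodic: "\<And>x. B (x mod v) = B x" and "v > 0"
    and "no_monochromatic_block B" and "changes_twice B n"
  shows "alternating v B"
  unfolding alternating_def
proof (intro allI impI)
  fix i
  have shift: "B (n + i * v + d) = B (n + d)" for d
    using periodic_add_mult[of B v "n + d" i, OF periodic] by (simp add: algebra_simps)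
  have "changes_twice B (n + i * v)"
    using assms(4) shift[of 0] shift[of 1] shift[of 2] unfolding changes_twice_def by simp
  moreover have "i \<le> n + i * v"
    using \<open>v > 0\<close> by (simp add: trans_le_add2)
  ultimately have "changes_twice B i"
    using changes_twice_le[OF assms(3)] by blast
  then show "B ((i + 1) mod v) \<noteq> B i"
    using periodic[of "i + 1"] unfolding changes_twice_def by simp
qed

lemma maximal_segment_length:
  assumes "no_monochromatic_block B" and "\<And>j. \<not> changes_twice B j"
    and "maximal_segment B j k"
  shows "k = 2 \<or> k = 3"
proof -
  have j: "j - 1 + 1 = j" "j - 1 + 2 = j + 1"
    using assms(3) unfolding maximal_segment_def by (cases j; simp)+
  have "k \<noteq> 0"
    using assms(3) unfolding maximal_segment_def by (metis add_0_right)
  moreover have "k \<noteq> 1"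
    using assms(2)[of "j - 1"] assms(3) j unfolding maximal_segment_def changes_twice_def by auto
  moreover have "\<not> 3 < k"
  proof
    assume "3 < k"
    have "\<forall>t<k. B (j + t) = B j"
      using assms(3) unfolding maximal_segment_def by blast
    moreover have "1 < k"
      using \<open>3 < k\<close> by simp
    ultimately have "B (j + 1) = B j" "B (j + 3) = B j"
      using \<open>3 < k\<close> by blast+
    then show False
      using assms(1) unfolding no_monochromatic_block_def by metis
  qed
  ultimately show ?thesis by linarith
qed

lemma maximal_segment_from_change:
  assumes "no_monochromatic_block B" and "\<And>j. \<not> changes_twice B j"
    and "B (j - 1) \<noteq> B j" and "1 \<le> j"
  obtains k where "maximal_segment B j k"
proof -
  have "j - 1 + 1 = j" "j - 1 + 2 = j + 1"
    using assms(4) by simp_all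
  then have next_eq: "B (j + 1) = B j"
    using assms(2)[of "j - 1"] assms(3) unfolding changes_twice_def by auto
  show ?thesis
  proof (cases "B (j + 2) = B j")
    case True
    with next_eq have "B (j + 3) \<noteq> B j"
      using assms(1) unfolding no_monochromatic_block_def by metis
    with True next_eq have "maximal_segment B j 3"
      using assms(3) unfolding maximal_segment_def by (auto simp: less_Suc_eq numeral_3_eq_3)
    then show ?thesis by (rule that)
  next
    case False
    with next_eq have "maximal_segment B j 2"
      using assms(3) unfolding maximal_segment_def by (auto simp: less_Suc_eq numeral_2_eq_2)
    then show ?thesis by (rule that)
  qed
qed

text \<open>Three equal digits just before \<open>p\<close> would form a monochromatic block ending at \<open>p\<close>.\<close>
lemma change_within_two_before:
  assumes "no_monochromatic_block B" and "3 \<le> p"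
  obtains s where "s < 3" "B (p - s - 1) \<noteq> B (p - s)" "\<forall>t\<le>s. B (p - s + t) = B (p - s)"
proof -
  consider "B (p - 1) \<noteq> B p"
    | "B (p - 1) = B p" "B (p - 2) \<noteq> B (p - 1)"
    | "B (p - 1) = B p" "B (p - 2) = B (p - 1)"
    by blast
  then show ?thesis
  proof cases
    case 1
    then show ?thesis by (intro that[of 0]) auto
  next
    case 2
    moreover have "p - 1 + 1 = p" "p - 1 - 1 = p - 2"
      using assms(2) by auto
    ultimately show ?thesis
      by (intro that[of 1]) (auto simp: le_Suc_eq)
  next
    case 3
    moreover have e: "p - 3 + 1 = p - 2" "p - 3 + 3 = p" "p - 2 - 1 = p - 3"
      "p - 2 + 1 = p - 1" "p - 2 + 2 = p"
      using assms(2) by auto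
    moreover have "B (p - 3) \<noteq> B (p - 2)"
      using assms(1) 3 e unfolding no_monochromatic_block_def by metis
    ultimately show ?thesis
      by (intro that[of 2]) (auto simp: le_Suc_eq numeral_2_eq_2)
  qed
qed

lemma is_run_mod_iff:
  assumes periodic: "\<And>x. B (x mod v) = B x" and "v > 0" and "1 \<le> j"
  shows "is_run v B (j mod v) k \<longleftrightarrow> 0 < k \<and> k < v \<and> maximal_segment B j k"
proof -
  have "(j mod v + v - 1) mod v = (j - 1) mod v"
  proof -
    have "j mod v + v - 1 = j mod v + (v - 1)"
      using \<open>v > 0\<close> by simp
    moreover have "j + (v - 1) = j - 1 + 1 * v"
      using assms(2,3) by simp
    ultimately show ?thesis
      by (metis mod_add_left_eq mod_mult_self1)
  qed
  then have "B ((j mod v + v - 1) mod v) = B (j - 1)"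
    using periodic[of "j - 1"] by simp
  moreover have "B ((j mod v + t) mod v) = B (j + t)" for t
    using periodic[of "j + t"] by (simp add: mod_add_left_eq)
  ultimately show ?thesis
    unfolding is_run_def maximal_segment_def using periodic[of j] \<open>v > 0\<close> by auto
qed

lemma runs_2_or_3_if_never_changes_twice:
  assumes periodic: "\<And>x. B (x mod v) = B x" and "4 \<le> v"
    and "no_monochromatic_block B" and "\<And>j. \<not> changes_twice B j"
  shows "runs_2_or_3 v B"
proof -
  have lengths: "k = 2 \<or> k = 3" if "maximal_segment B j k" for j k
    using maximal_segment_length[OF assms(3,4) that] .
  have "k = 2 \<or> k = 3" if "is_run v B j k" for j k
  proof -
    have "j < v"
      using that unfolding is_run_def by simp
    then have "is_run v B ((j + v) mod v) k"
      using that by simp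
    then have "maximal_segment B (j + v) k"
      using is_run_mod_iff[of B v "j + v", OF periodic] assms(2) by simp
    then show ?thesis
      by (rule lengths)
  qed
  moreover have "\<exists>j k. is_run v B j k \<and> (\<exists>t<k. (j + t) mod v = i)" if "i < v" for i
  proof -
    define p where "p = i + v"
    have "3 \<le> p" "p mod v = i"
      using assms(2) \<open>i < v\<close> unfolding p_def by auto
    obtain s where s: "s < 3" "B (p - s - 1) \<noteq> B (p - s)"
      and const: "\<forall>t\<le>s. B (p - s + t) = B (p - s)"
      using change_within_two_before[OF assms(3) \<open>3 \<le> p\<close>] by blast
    have "1 \<le> p - s"
      using \<open>s < 3\<close> \<open>3 \<le> p\<close> by linarith
    obtain k where seg: "maximal_segment B (p - s) k"
      using maximal_segment_from_change[OF assms(3,4) s(2) \<open>1 \<le> p - s\<close>] .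
    have "s < k"
    proof (rule ccontr)
      assume "\<not> s < k"
      then have "B (p - s + k) = B (p - s)"
        using const by simp
      with seg show False
        unfolding maximal_segment_def by simp
    qed
    have "0 < k" "k < v"
      using lengths[OF seg] assms(2) by auto
    then have "is_run v B ((p - s) mod v) k"
      using is_run_mod_iff[of B v "p - s", OF periodic _ \<open>1 \<le> p - s\<close>] seg by simp
    moreover have "((p - s) mod v + s) mod v = i"
      using \<open>s < 3\<close> \<open>3 \<le> p\<close> \<open>p mod v = i\<close> by (simp add: mod_add_left_eq)
    ultimately show ?thesis
      using \<open>s < k\<close> by blast
  qed
  ultimately show ?thesis
    unfolding runs_2_or_3_def by blast
qed

theorem mainTheorem5:
  fixes v :: nat and S :: "nat set"
  assumes "v \<ge> 8"
    and "blocking_set {..<v} (Cv_blocks v) S"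
  shows "alternating v (word v S) \<or> runs_2_or_3 v (word v S)"
proof -
  have "v > 0" using assms(1) by simp
  have no_mono: "no_monochromatic_block (word v S)"
    using blocking_set_no_monochromatic_block[OF \<open>v > 0\<close> assms(2)] .
  show ?thesis
  proof (cases "\<exists>n. changes_twice (word v S) n")
    case True
    then show ?thesis
      using alternating_if_changes_twice[OF word_mod \<open>v > 0\<close> no_mono] by blast
  next
    case False
    then show ?thesis
      using runs_2_or_3_if_never_changes_twice[OF word_mod _ no_mono] assms(1) by auto
  qed
qed

end
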